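(* Let $k\geq 4$ and let $G$ be a diregular $(2,k,+3)$-digraph. Let $u,v$ be distinct vertices with exactly one common out-neighbour $u_2$, write $N^+(u)=\{u_1,u_2\}$, $N^+(v)=\{v_1,u_2\}$, $N^+(u_1)=\{u_3,u_4\}$ and $N^+(v_1)=\{v_3,v_4\}$. Then $\{u_3,u_4\}\subseteq\{v_3,v_4\}\cup O(v)$ and $\{v_3,v_4\}\subseteq\{u_3,u_4\}\cup O(u)$.
   Context: A digraph is $k$-geodetic if for every ordered pair of vertices $x,y$ there is at most one directed path from $x$ to $y$ of length at most $k$ (the trivial path counts). A diregular $(2,k,+3)$-digraph is a $k$-geodetic digraph of order $1+2+\dots+2^k+3$ in which every vertex has in- and out-degree $2$. $N^+(x)$ is the set of out-neighbours of $x$. $d(x,y)$ is the directed distance; $O(x)=\{y: d(x,y)\geq k+1\}$ is the outlier set of $x$. *)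

theory Defs
  imports Main "HOL-Library.Extended_Nat"
begin

definition out_nbrs :: "('a \<times> 'a) set \<Rightarrow> 'a \<Rightarrow> 'a set" where
  "out_nbrs E x = {y. (x, y) \<in> E}"

definition in_nbrs :: "('a \<times> 'a) set \<Rightarrow> 'a \<Rightarrow> 'a set" where
  "in_nbrs E x = {y. (y, x) \<in> E}"

definition is_walk :: "('a \<times> 'a) set \<Rightarrow> 'a list \<Rightarrow> bool" where
  "is_walk E p \<longleftrightarrow> p \<noteq> [] \<and> (\<forall>i. Suc i < length p \<longrightarrow> (p ! i, p ! Suc i) \<in> E)"

definition walk_len :: "'a list \<Rightarrow> nat" where
  "walk_len p = length p - 1"

definition walks_from_to :: "('a \<times> 'a) set \<Rightarrow> 'a \<Rightarrow> 'a \<Rightarrow> 'a list set" where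
  "walks_from_to E x y = {p. is_walk E p \<and> hd p = x \<and> last p = y}"

definition digraph :: "'a set \<Rightarrow> ('a \<times> 'a) set \<Rightarrow> bool" where
  "digraph V E \<longleftrightarrow> finite V \<and> E \<subseteq> V \<times> V"

definition k_geodetic :: "'a set \<Rightarrow> ('a \<times> 'a) set \<Rightarrow> nat \<Rightarrow> bool" where
  "k_geodetic V E k \<longleftrightarrow>
     (\<forall>x\<in>V. \<forall>y\<in>V. \<forall>p\<in>walks_from_to E x y. \<forall>q\<in>walks_from_to E x y.
        walk_len p \<le> k \<longrightarrow> walk_len q \<le> k \<longrightarrow> p = q)"

definition diregular :: "'a set \<Rightarrow> ('a \<times> 'a) set \<Rightarrow> nat \<Rightarrow> bool" where
  "diregular V E d \<longleftrightarrow> (\<forall>x\<in>V. card (out_nbrs E x) = d \<and> card (in_nbrs E x) = d)"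

definition digraph_2_k_plus3 :: "'a set \<Rightarrow> ('a \<times> 'a) set \<Rightarrow> nat \<Rightarrow> bool" where
  "digraph_2_k_plus3 V E k \<longleftrightarrow>
     digraph V E \<and> diregular V E 2 \<and> k_geodetic V E k \<and>
     card V = (\<Sum>i\<le>k. (2::nat) ^ i) + 3"

text \<open>Directed distance (infinite if y is unreachable from x).\<close>
definition dist :: "('a \<times> 'a) set \<Rightarrow> 'a \<Rightarrow> 'a \<Rightarrow> enat" where
  "dist E x y = (INF p \<in> walks_from_to E x y. enat (walk_len p))"

definition outlier :: "'a set \<Rightarrow> ('a \<times> 'a) set \<Rightarrow> nat \<Rightarrow> 'a \<Rightarrow> 'a set" where
  "outlier V E k x = {y \<in> V. dist E x y \<ge> enat (k + 1)}"

end

theory Submission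
  imports Defs
begin

(*
  Write A and B for the sets of vertices at distance at most k - 1 from u1 and from v1. In a
  (2,k,+3)-digraph the ball of radius k around a vertex has 2^(k+1) - 1 elements and misses exactly
  three outliers. Since u and v share only u2, the ball of radius k of v meets A only in v and in B,
  so A - B lies in {v} together with the outliers of v, and symmetrically; as |A| = |B| both
  differences have the same size, at most 4.

  Let x be an out-neighbour of u1 that is neither an out-neighbour nor an outlier of v. Then v1
  reaches x in j steps, j at most k - 1. If j + 2 is at most k, a whole out-layer at distance k from
  v1 or u1 (of size at least 4) lands in one of the differences, which is too much; hence j = k - 1,
  and then the outliers of v are exactly u1 and the out-neighbours of x. For the other
  out-neighbour x' of u1, the same reasoning would give x and x' a common out-neighbour, contradicting
  geodecity; so x' is an out-neighbour of v1, and then B - A is shown to contain five vertices.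
*)

lemma relpow_Suc_left_iff:
  "(x, z) \<in> R ^^ Suc n \<longleftrightarrow> (\<exists>y. (x, y) \<in> R \<and> (y, z) \<in> R ^^ n)"
  by (blast intro: relpow_Suc_I2 dest: relpow_Suc_D2)

lemma relpow_2_I: "(x, y) \<in> R \<Longrightarrow> (y, z) \<in> R \<Longrightarrow> (x, z) \<in> R ^^ 2"
  by (auto simp: numeral_2_eq_2)

lemma is_walk_Cons_iff:
  "is_walk E (x # p) \<longleftrightarrow> p = [] \<or> (x, hd p) \<in> E \<and> is_walk E p"
  unfolding is_walk_def by (cases p) (auto simp: nth_Cons split: nat.splits)

lemma relpow_iff_walk:
  "(x, y) \<in> E ^^ n \<longleftrightarrow> (\<exists>p. is_walk E p \<and> hd p = x \<and> last p = y \<and> length p = Suc n)"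
proof (induction n arbitrary: x)
  case 0
  show ?case
    by (auto simp: is_walk_def length_Suc_conv intro!: exI[of _ "[x]"])
next
  case (Suc n)
  have "(x, y) \<in> E ^^ Suc n \<longleftrightarrow>
      (\<exists>z p. (x, z) \<in> E \<and> is_walk E p \<and> hd p = z \<and> last p = y \<and> length p = Suc n)"
    by (simp add: relpow_Suc_left_iff Suc.IH del: relpow.simps)
  also have "\<dots> \<longleftrightarrow> (\<exists>q. is_walk E q \<and> hd q = x \<and> last q = y \<and> length q = Suc (Suc n))"
  proof
    assume "\<exists>z p. (x, z) \<in> E \<and> is_walk E p \<and> hd p = z \<and> last p = y \<and> length p = Suc n"
    then obtain p where "(x, hd p) \<in> E" "is_walk E p" "last p = y" "length p = Suc n"
      by blast
    then show "\<exists>q. is_walk E q \<and> hd q = x \<and> last q = y \<and> length q = Suc (Suc n)"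
      by (intro exI[of _ "x # p"]) (auto simp: is_walk_Cons_iff)
  next
    assume "\<exists>q. is_walk E q \<and> hd q = x \<and> last q = y \<and> length q = Suc (Suc n)"
    then obtain p where "is_walk E (x # p)" "last (x # p) = y" "length p = Suc n"
      by (auto simp: length_Suc_conv)
    then have "(x, hd p) \<in> E" "is_walk E p" "last p = y"
      by (auto simp: is_walk_Cons_iff)
    with \<open>length p = Suc n\<close>
    show "\<exists>z p. (x, z) \<in> E \<and> is_walk E p \<and> hd p = z \<and> last p = y \<and> length p = Suc n"
      by (intro exI[of _ "hd p"] exI[of _ p]) simp
  qed
  finally show ?case .
qed

lemma walk_relpow: "is_walk E p \<Longrightarrow> (hd p, last p) \<in> E ^^ walk_len p"
  unfolding relpow_iff_walk walk_len_def is_walk_def by auto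

lemma outlier_iff:
  "y \<in> outlier V E k x \<longleftrightarrow> y \<in> V \<and> (\<forall>n\<le>k. (x, y) \<notin> E ^^ n)"
proof -
  have "enat (k + 1) \<le> dist E x y \<longleftrightarrow> (\<forall>p\<in>walks_from_to E x y. k + 1 \<le> walk_len p)"
    by (simp add: dist_def le_INF_iff)
  also have "\<dots> \<longleftrightarrow> (\<forall>n\<le>k. (x, y) \<notin> E ^^ n)"
  proof
    assume "\<forall>p\<in>walks_from_to E x y. k + 1 \<le> walk_len p"
    then show "\<forall>n\<le>k. (x, y) \<notin> E ^^ n"
      by (auto simp: relpow_iff_walk walks_from_to_def walk_len_def)
  next
    assume none: "\<forall>n\<le>k. (x, y) \<notin> E ^^ n"
    show "\<forall>p\<in>walks_from_to E x y. k + 1 \<le> walk_len p"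
    proof
      fix p
      assume "p \<in> walks_from_to E x y"
      then have "(x, y) \<in> E ^^ walk_len p"
        using walk_relpow by (auto simp: walks_from_to_def)
      with none show "k + 1 \<le> walk_len p"
        using not_less_eq_eq by auto
    qed
  qed
  finally show ?thesis
    by (simp add: outlier_def)
qed

lemma Image_relpow_Suc: "(E ^^ Suc n) `` {x} = (\<Union>y\<in>out_nbrs E x. (E ^^ n) `` {y})"
  by (auto simp: relpow_Suc_left_iff out_nbrs_def simp del: relpow.simps)

definition out_ball :: "('a \<times> 'a) set \<Rightarrow> 'a \<Rightarrow> nat \<Rightarrow> 'a set" where
  "out_ball E x n = (\<Union>m\<le>n. (E ^^ m) `` {x})"

lemma mem_out_ball_iff: "y \<in> out_ball E x n \<longleftrightarrow> (\<exists>m\<le>n. (x, y) \<in> E ^^ m)"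
  by (auto simp: out_ball_def)

lemma relpow_in_out_ball: "(x, y) \<in> E ^^ m \<Longrightarrow> m \<le> n \<Longrightarrow> y \<in> out_ball E x n"
  by (auto simp: mem_out_ball_iff)

lemma outlier_eq_Diff_out_ball: "outlier V E k x = V - out_ball E x k"
  by (auto simp: outlier_iff mem_out_ball_iff)

locale geodetic_digraph =
  fixes V :: "'a set" and E :: "('a \<times> 'a) set" and k :: nat
  assumes digraph: "digraph V E" and geodetic: "k_geodetic V E k"
begin

lemma finite_V: "finite V"
  using digraph by (simp add: digraph_def)

lemma arc_in_V: "(x, y) \<in> E \<Longrightarrow> x \<in> V \<and> y \<in> V"
  using digraph by (auto simp: digraph_def)

lemma relpow_in_V: "x \<in> V \<Longrightarrow> (x, y) \<in> E ^^ n \<Longrightarrow> y \<in> V"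
  by (induction n arbitrary: x) (auto simp: relpow_Suc_left_iff dest: arc_in_V)

lemma out_ball_subset_V: "x \<in> V \<Longrightarrow> out_ball E x n \<subseteq> V"
  by (auto simp: mem_out_ball_iff intro: relpow_in_V)

lemma finite_out_ball: "x \<in> V \<Longrightarrow> finite (out_ball E x n)"
  using out_ball_subset_V finite_V by (rule finite_subset)

lemma walk_unique:
  assumes "is_walk E p" "is_walk E q" "hd p = hd q" "last p = last q" "hd p \<in> V"
    and "length p \<le> Suc k" "length q \<le> Suc k"
  shows "p = q"
proof -
  have "last p \<in> V"
    using relpow_in_V[OF assms(5) walk_relpow[OF assms(1)]] .
  then show ?thesis
    using geodetic assms unfolding k_geodetic_def walks_from_to_def walk_len_def by fastforce
qed

lemma relpow_length_unique:
  assumes "x \<in> V" "(x, y) \<in> E ^^ m" "(x, y) \<in> E ^^ n" "m \<le> k" "n \<le> k"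
  shows "m = n"
proof -
  obtain p q where "is_walk E p" "hd p = x" "last p = y" "length p = Suc m"
    and "is_walk E q" "hd q = x" "last q = y" "length q = Suc n"
    using assms(2,3) relpow_iff_walk by metis
  with assms walk_unique[of p q] show ?thesis
    by force
qed

lemma no_short_cycle: "x \<in> V \<Longrightarrow> (x, x) \<in> E ^^ n \<Longrightarrow> n \<le> k \<Longrightarrow> n = 0"
  using relpow_length_unique[of x x 0 n] by simp

lemma out_nbr_unique:
  assumes "(x, a) \<in> E" "(x, b) \<in> E" "(a, y) \<in> E ^^ m" "(b, y) \<in> E ^^ n" "m < k" "n < k"
  shows "a = b"
proof -
  obtain p q where p: "is_walk E p" "hd p = a" "last p = y" "length p = Suc m"
    and q: "is_walk E q" "hd q = b" "last q = y" "length q = Suc n"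
    using assms(3,4) relpow_iff_walk by metis
  have "x # p = x # q"
    using p q assms arc_in_V
    by (intro walk_unique) (auto simp: is_walk_Cons_iff)
  then show ?thesis
    using p q by simp
qed

lemma relpow_k_notin_out_ball:
  "x \<in> V \<Longrightarrow> (x, w) \<in> E ^^ k \<Longrightarrow> 0 < k \<Longrightarrow> w \<notin> out_ball E x (k - 1)"
  by (auto simp: mem_out_ball_iff dest: relpow_length_unique)

lemma layer_subset_out_ball_Diff:
  assumes "a \<in> V" "(a, w) \<in> E ^^ i" "(b, w) \<in> E ^^ d" "i + t = k" "d + t < k"
  shows "(E ^^ t) `` {w} \<subseteq> out_ball E b (k - 1) - out_ball E a (k - 1)"
proof
  fix z
  assume "z \<in> (E ^^ t) `` {w}"
  then have wz: "(w, z) \<in> E ^^ t"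
    by simp
  have "(b, z) \<in> E ^^ (d + t)"
    using assms(3) wz by (auto simp: relpow_add)
  then have "z \<in> out_ball E b (k - 1)"
    by (rule relpow_in_out_ball) (use assms(5) in simp)
  moreover have "(a, z) \<in> E ^^ k"
    using assms(2,4) wz by (auto simp: relpow_add)
  then have "z \<notin> out_ball E a (k - 1)"
    using assms(1,5) relpow_k_notin_out_ball by simp
  ultimately show "z \<in> out_ball E b (k - 1) - out_ball E a (k - 1)"
    by blast
qed

end

locale geodetic_2_digraph = geodetic_digraph +
  assumes out_degree: "x \<in> V \<Longrightarrow> card (out_nbrs E x) = 2"
begin

lemma out_nbrs_eq_pair: "x \<in> V \<Longrightarrow> \<exists>a b. out_nbrs E x = {a, b} \<and> a \<noteq> b"
  unfolding card_2_iff[symmetric] by (rule out_degree)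

lemma out_nbrs_eq_insert:
  assumes "(x, a) \<in> E"
  obtains b where "out_nbrs E x = {a, b}" "a \<noteq> b"
proof -
  obtain c d where "out_nbrs E x = {c, d}" "c \<noteq> d"
    using out_nbrs_eq_pair arc_in_V[OF assms] by blast
  moreover have "a \<in> out_nbrs E x"
    using assms by (simp add: out_nbrs_def)
  ultimately show ?thesis
    using that by (auto simp: insert_commute)
qed

lemma card_layer: "x \<in> V \<Longrightarrow> n \<le> k \<Longrightarrow> card ((E ^^ n) `` {x}) = 2 ^ n"
proof (induction n arbitrary: x)
  case 0
  then show ?case by simp
next
  case (Suc n)
  obtain a b where ab: "out_nbrs E x = {a, b}" "a \<noteq> b"
    using out_nbrs_eq_pair Suc.prems by blast
  then have arcs: "(x, a) \<in> E" "(x, b) \<in> E"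
    by (auto simp: out_nbrs_def)
  then have V: "a \<in> V" "b \<in> V"
    using arc_in_V by auto
  have split: "(E ^^ Suc n) `` {x} = (E ^^ n) `` {a} \<union> (E ^^ n) `` {b}"
    using ab(1) by (simp only: Image_relpow_Suc) simp
  have disjoint: "(E ^^ n) `` {a} \<inter> (E ^^ n) `` {b} = {}"
  proof (rule ccontr)
    assume "(E ^^ n) `` {a} \<inter> (E ^^ n) `` {b} \<noteq> {}"
    then obtain y where "(a, y) \<in> E ^^ n" "(b, y) \<in> E ^^ n"
      by blast
    then have "a = b"
      using out_nbr_unique[OF arcs] Suc.prems(2) by simp
    with ab(2) show False ..
  qed
  have "finite ((E ^^ n) `` {y})" if "y \<in> V" for y
    using finite_V relpow_in_V[OF that] by (auto intro: finite_subset)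
  then have "card ((E ^^ Suc n) `` {x}) = card ((E ^^ n) `` {a}) + card ((E ^^ n) `` {b})"
    unfolding split using V disjoint by (simp add: card_Un_disjoint)
  with Suc.IH V Suc.prems(2) show ?case
    by simp
qed

lemma layer_two_elements:
  assumes "x \<in> V" "0 < t" "t \<le> k"
  obtains z1 z2 where "z1 \<noteq> z2" "(x, z1) \<in> E ^^ t" "(x, z2) \<in> E ^^ t"
proof -
  have "2 \<le> card ((E ^^ t) `` {x})"
    using card_layer[OF assms(1,3)] assms(2) by (simp add: self_le_power)
  then obtain z1 z2 where "z1 \<in> (E ^^ t) `` {x}" "z2 \<in> (E ^^ t) `` {x}" "z1 \<noteq> z2"
    by (auto simp: numeral_2_eq_2 card_le_Suc_iff)
  then show ?thesis
    using that by blast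
qed

lemma card_out_ball:
  assumes x: "x \<in> V" and n: "n \<le> k"
  shows "card (out_ball E x n) = (\<Sum>m\<le>n. 2 ^ m)"
proof -
  have "card (out_ball E x n) = (\<Sum>m\<le>n. card ((E ^^ m) `` {x}))"
    unfolding out_ball_def
  proof (rule card_UN_disjoint)
    show "\<forall>m\<in>{..n}. finite ((E ^^ m) `` {x})"
      using finite_V relpow_in_V[OF x] by (auto intro: finite_subset)
    show "\<forall>m\<in>{..n}. \<forall>m'\<in>{..n}. m \<noteq> m' \<longrightarrow> (E ^^ m) `` {x} \<inter> (E ^^ m') `` {x} = {}"
      using relpow_length_unique[OF x] n by fastforce
  qed simp
  also have "\<dots> = (\<Sum>m\<le>n. 2 ^ m)"
    using card_layer x n by simp
  finally show ?thesis .
qed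

lemma card_out_ball_Diff_commute:
  assumes "x \<in> V" "y \<in> V" "n \<le> k"
  shows "card (out_ball E x n - out_ball E y n) = card (out_ball E y n - out_ball E x n)"
proof -
  have "card (out_ball E x n) = card (out_ball E y n)"
    using card_out_ball assms by simp
  then show ?thesis
    using finite_out_ball assms by (simp add: card_Diff_subset_Int Int_commute)
qed

end

locale plus3_digraph = geodetic_2_digraph +
  assumes order: "card V = (\<Sum>i\<le>k. 2 ^ i) + 3"
begin

lemma finite_outlier: "finite (outlier V E k x)"
  by (simp add: outlier_eq_Diff_out_ball finite_V)

lemma card_outlier: "x \<in> V \<Longrightarrow> card (outlier V E k x) = 3"
  by (simp add: outlier_eq_Diff_out_ball card_Diff_subset finite_out_ball out_ball_subset_V
      card_out_ball order)

lemma card_insert_outlier_le: "x \<in> V \<Longrightarrow> card (insert y (outlier V E k x)) \<le> 4"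
  by (simp add: card_insert_if finite_outlier card_outlier)

end

locale common_out_nbr = plus3_digraph +
  fixes u v u1 v1 u2 :: 'a
  assumes k_ge_4: "4 \<le> k"
    and u_in_V: "u \<in> V" and v_in_V: "v \<in> V" and u_neq_v: "u \<noteq> v"
    and out_u: "out_nbrs E u = {u1, u2}" and out_v: "out_nbrs E v = {v1, u2}"
    and common_out: "out_nbrs E u \<inter> out_nbrs E v = {u2}"
begin

lemma swapped: "common_out_nbr V E k v u v1 u1 u2"
  using plus3_digraph_axioms k_ge_4 u_in_V v_in_V u_neq_v out_u out_v common_out
  unfolding common_out_nbr_def common_out_nbr_axioms_def by (auto simp: Int_commute)

lemma arcs: "(u, u1) \<in> E" "(u, u2) \<in> E" "(v, v1) \<in> E" "(v, u2) \<in> E"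
  using out_u out_v by (auto simp: out_nbrs_def)

lemma u1_in_V: "u1 \<in> V" and v1_in_V: "v1 \<in> V"
  using arcs arc_in_V by auto

lemma u1_neq_u2: "u1 \<noteq> u2"
  using out_degree[OF u_in_V] out_u by auto

lemma u1_neq_v1: "u1 \<noteq> v1"
  using common_out out_u out_v u1_neq_u2 by auto

lemma relpow_from_v_cases: "(v, w) \<in> E ^^ Suc n \<Longrightarrow> (v1, w) \<in> E ^^ n \<or> (u2, w) \<in> E ^^ n"
  using Image_relpow_Suc[where E = E and n = n and x = v] out_v by auto

lemma not_reached_from_u1_and_u2:
  "(u1, w) \<in> E ^^ i \<Longrightarrow> (u2, w) \<in> E ^^ n \<Longrightarrow> i < k \<Longrightarrow> n < k \<Longrightarrow> False"
  using out_nbr_unique[OF arcs(1,2)] u1_neq_u2 by blast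

text \<open>Otherwise v would reach u2 along v1 and u in at most k steps, besides the arc (v, u2).\<close>
lemma v1_to_u_long: "(v1, u) \<in> E ^^ m \<Longrightarrow> k < m + 2"
  using relpow_Suc_I2[OF arcs(3) relpow_Suc_I[OF _ arcs(2)]] arcs(4)
    relpow_length_unique[OF v_in_V, of u2 "Suc (Suc m)" 1] by fastforce

lemma out_ball_Diff_subset:
  "out_ball E u1 (k - 1) - out_ball E v1 (k - 1) \<subseteq> insert v (outlier V E k v)"
proof
  fix w
  assume w: "w \<in> out_ball E u1 (k - 1) - out_ball E v1 (k - 1)"
  then obtain i where i: "i \<le> k - 1" "(u1, w) \<in> E ^^ i"
    by (auto simp: mem_out_ball_iff)
  show "w \<in> insert v (outlier V E k v)"
  proof (rule ccontr)
    assume "w \<notin> insert v (outlier V E k v)"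
    moreover have "w \<in> V"
      using relpow_in_V[OF u1_in_V i(2)] .
    ultimately obtain n where n: "n \<le> k" "(v, w) \<in> E ^^ n" "w \<noteq> v"
      by (auto simp: outlier_iff)
    then obtain n' where n': "n = Suc n'"
      by (cases n) auto
    then have "(v1, w) \<in> E ^^ n' \<or> (u2, w) \<in> E ^^ n'"
      using n(2) relpow_from_v_cases by simp
    then show False
    proof
      assume "(v1, w) \<in> E ^^ n'"
      with w n(1) n' show False
        by (auto simp: mem_out_ball_iff)
    next
      assume "(u2, w) \<in> E ^^ n'"
      moreover have "i < k" "n' < k"
        using i(1) n(1) n' k_ge_4 by auto
      ultimately show False
        using not_reached_from_u1_and_u2[OF i(2)] by blast
    qed
  qed
qed

lemma card_out_ball_Diff_le: "card (out_ball E u1 (k - 1) - out_ball E v1 (k - 1)) \<le> 4"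
  by (meson card_mono[OF _ out_ball_Diff_subset] card_insert_outlier_le[OF v_in_V]
      finite_outlier finite_insert le_trans)

lemma not_arc_u1_v1: "(u1, v1) \<notin> E"
proof
  assume arc: "(u1, v1) \<in> E"
  have "(E ^^ (k - 1)) `` {v1} \<subseteq> out_ball E v1 (k - 1) - out_ball E u1 (k - 1)"
    using arc k_ge_4 by (intro layer_subset_out_ball_Diff[OF u1_in_V, of v1 1 v1 0]) auto
  then have "card ((E ^^ (k - 1)) `` {v1}) \<le> 4"
    using common_out_nbr.card_out_ball_Diff_le[OF swapped]
    by (meson card_mono finite_Diff finite_out_ball[OF v1_in_V] le_trans)
  moreover have "(2::nat) ^ 3 \<le> 2 ^ (k - 1)"
    using k_ge_4 by (intro power_increasing) auto
  ultimately show False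
    using card_layer[OF v1_in_V] by simp
qed

text \<open>A difference of four elements must be all of insert u (outlier V E k u).\<close>
lemma v1_to_u_if_large_Diff:
  assumes "4 \<le> card (out_ball E v1 (k - 1) - out_ball E u1 (k - 1))"
  shows "(v1, u) \<in> E ^^ (k - 1)"
proof -
  have "card (insert u (outlier V E k u)) \<le> card (out_ball E v1 (k - 1) - out_ball E u1 (k - 1))"
    using assms card_insert_outlier_le[OF u_in_V, of u] by linarith
  then have "out_ball E v1 (k - 1) - out_ball E u1 (k - 1) = insert u (outlier V E k u)"
    using common_out_nbr.out_ball_Diff_subset[OF swapped] finite_outlier by (intro card_seteq) auto
  then have "u \<in> out_ball E v1 (k - 1)"
    by blast
  then obtain m where m: "m \<le> k - 1" "(v1, u) \<in> E ^^ m"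
    by (auto simp: mem_out_ball_iff)
  then have "m = k - 1"
    using v1_to_u_long by fastforce
  with m(2) show ?thesis
    by simp
qed

lemma v1_to_u1_long: "(v1, u1) \<in> E ^^ i \<Longrightarrow> k < i + 2"
proof (rule ccontr)
  assume path: "(v1, u1) \<in> E ^^ i" and "\<not> k < i + 2"
  then have i: "i + 2 \<le> k"
    by simp
  have layer: "(E ^^ (k - i)) `` {u1} \<subseteq> out_ball E u1 (k - 1) - out_ball E v1 (k - 1)"
  proof (rule layer_subset_out_ball_Diff[OF v1_in_V path, of u1 0])
    have "i \<noteq> 0"
      using path u1_neq_v1 by (cases i) auto
    then show "0 + (k - i) < k"
      using i by simp
  qed (use i in auto)
  have "(2::nat) ^ 2 \<le> 2 ^ (k - i)"
    by (rule power_increasing) (use i in auto)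
  also have "\<dots> = card ((E ^^ (k - i)) `` {u1})"
    using card_layer[OF u1_in_V] by simp
  also have "\<dots> \<le> card (out_ball E u1 (k - 1) - out_ball E v1 (k - 1))"
    using layer finite_out_ball[OF u1_in_V] by (intro card_mono) auto
  finally have "4 \<le> card (out_ball E v1 (k - 1) - out_ball E u1 (k - 1))"
    using card_out_ball_Diff_commute[OF u1_in_V v1_in_V] by simp
  then have "(v1, u1) \<in> E ^^ Suc (k - 1)"
    using relpow_Suc_I[OF v1_to_u_if_large_Diff arcs(1)] by simp
  then have "(v1, u1) \<in> E ^^ k"
    using k_ge_4 by simp
  then show False
    using relpow_length_unique[OF v1_in_V path] i by fastforce
qed

lemma v1_reaches_out_nbr_u1:
  assumes arc: "(u1, x) \<in> E" and x: "x \<notin> outlier V E k v"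
  obtains j where "j \<le> k - 1" "(v1, x) \<in> E ^^ j"
proof -
  obtain n where n: "n \<le> k" "(v, x) \<in> E ^^ n"
    using x arc_in_V[OF arc] by (auto simp: outlier_iff)
  show ?thesis
  proof (cases n)
    case 0
    then have "(u1, v) \<in> E ^^ 1"
      using n arc by simp
    then show ?thesis
      using common_out_nbr.v1_to_u_long[OF swapped] k_ge_4 by fastforce
  next
    case (Suc n')
    then have "(v1, x) \<in> E ^^ n' \<or> (u2, x) \<in> E ^^ n'"
      using n(2) relpow_from_v_cases by simp
    moreover have "(u2, x) \<notin> E ^^ n'"
      using not_reached_from_u1_and_u2[of x 1 n'] arc n(1) Suc k_ge_4 by auto
    ultimately show ?thesis
      using that[of n'] n(1) Suc by simp
  qed
qed

lemma u1_notin_out_ball_v1: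
  assumes arc: "(u1, x) \<in> E" and path: "(v1, x) \<in> E ^^ j" and j: "j \<le> k - 1"
  shows "u1 \<notin> out_ball E v1 (k - 1)"
proof
  assume "u1 \<in> out_ball E v1 (k - 1)"
  then obtain i where i: "i \<le> k - 1" "(v1, u1) \<in> E ^^ i"
    by (auto simp: mem_out_ball_iff)
  then have "Suc i = j"
    using relpow_length_unique[OF v1_in_V relpow_Suc_I[OF i(2) arc] path] i(1) j k_ge_4 by simp
  then show False
    using v1_to_u1_long[OF i(2)] j by simp
qed

lemma no_out_nbr_u1_at_middle_distance:
  assumes arc: "(u1, x) \<in> E" and path: "(v1, x) \<in> E ^^ j" and j: "2 \<le> j" "j + 2 \<le> k"
  shows False
proof -
  define S where "S = (E ^^ (k - j)) `` {x}"
  have x: "x \<in> V"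
    using arc arc_in_V by blast
  have "S \<subseteq> out_ball E u1 (k - 1) - out_ball E v1 (k - 1)"
    unfolding S_def using arc j
    by (intro layer_subset_out_ball_Diff[OF v1_in_V path, of u1 1]) auto
  moreover have "u1 \<in> out_ball E u1 (k - 1) - out_ball E v1 (k - 1)"
    using u1_notin_out_ball_v1[OF arc path] j by (auto simp: mem_out_ball_iff intro: relpow_0_I)
  ultimately have sub: "insert u1 S \<subseteq> out_ball E u1 (k - 1) - out_ball E v1 (k - 1)"
    by blast
  have "u1 \<notin> S"
  proof
    assume "u1 \<in> S"
    then have "(u1, u1) \<in> E ^^ Suc (k - j)"
      unfolding S_def using relpow_Suc_I2[OF arc] by simp
    then show False
      using no_short_cycle[OF u1_in_V] j by fastforce
  qed
  have "(2::nat) ^ 2 + 1 \<le> 2 ^ (k - j) + 1"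
    using power_increasing[of 2 "k - j" "2::nat"] j by simp
  also have "\<dots> = card (insert u1 S)"
    unfolding S_def using \<open>u1 \<notin> S\<close> card_layer[OF x] finite_subset[OF sub] finite_out_ball[OF u1_in_V]
    by (simp add: S_def)
  also have "\<dots> \<le> card (out_ball E u1 (k - 1) - out_ball E v1 (k - 1))"
    using sub finite_out_ball[OF u1_in_V] by (intro card_mono) auto
  finally have "5 \<le> card (out_ball E u1 (k - 1) - out_ball E v1 (k - 1))"
    by simp
  then show False
    using card_out_ball_Diff_le by simp
qed

lemma out_nbr_u1_far_from_v1:
  assumes arc: "(u1, x) \<in> E" and not_arc: "(v1, x) \<notin> E" and x: "x \<notin> outlier V E k v"
  shows "(v1, x) \<in> E ^^ (k - 1)"
proof -
  obtain j where j: "j \<le> k - 1" "(v1, x) \<in> E ^^ j"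
    using v1_reaches_out_nbr_u1[OF arc x] .
  have "j \<noteq> 0"
    using j(2) arc not_arc_u1_v1 by (cases j) auto
  moreover have "j \<noteq> 1"
    using j(2) not_arc by auto
  moreover have "\<not> (2 \<le> j \<and> j + 2 \<le> k)"
    using no_out_nbr_u1_at_middle_distance[OF arc j(2)] by blast
  ultimately have "j = k - 1"
    using j(1) by linarith
  with j(2) show ?thesis
    by simp
qed

lemma insert_u1_out_nbrs_subset_outlier_v:
  assumes arc: "(u1, x) \<in> E" and path: "(v1, x) \<in> E ^^ (k - 1)"
  shows "insert u1 (out_nbrs E x) \<subseteq> outlier V E k v"
proof
  have neq_v: "w \<noteq> v" if "(u1, w) \<in> E ^^ m" "m + 2 \<le> k" for w m
    using common_out_nbr.v1_to_u_long[OF swapped] that by fastforce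
  fix w
  assume "w \<in> insert u1 (out_nbrs E x)"
  then consider "w = u1" | "(x, w) \<in> E"
    by (auto simp: out_nbrs_def)
  then show "w \<in> outlier V E k v"
  proof cases
    case 1
    then have "w \<in> out_ball E u1 (k - 1) - out_ball E v1 (k - 1)"
      using u1_notin_out_ball_v1[OF arc path] relpow_in_out_ball[OF relpow_0_I] by simp
    then show ?thesis
      using out_ball_Diff_subset neq_v[of w 0] 1 k_ge_4 by auto
  next
    case 2
    have u1_w: "(u1, w) \<in> E ^^ 2"
      using relpow_2_I[OF arc 2] .
    moreover have "(v1, w) \<in> E ^^ k"
      using relpow_Suc_I[OF path 2] k_ge_4 by simp
    ultimately have "w \<in> out_ball E u1 (k - 1) - out_ball E v1 (k - 1)"
      using relpow_in_out_ball[OF u1_w, of "k - 1"] relpow_k_notin_out_ball[OF v1_in_V] k_ge_4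
      by simp
    then show ?thesis
      using out_ball_Diff_subset neq_v[OF u1_w] k_ge_4 by auto
  qed
qed

lemma outlier_v_eq:
  assumes arc: "(u1, x) \<in> E" and path: "(v1, x) \<in> E ^^ (k - 1)"
  shows "outlier V E k v = insert u1 (out_nbrs E x)"
proof (rule sym, rule card_seteq[OF finite_outlier insert_u1_out_nbrs_subset_outlier_v[OF assms]])
  have x: "x \<in> V"
    using arc arc_in_V by blast
  have "u1 \<notin> out_nbrs E x"
  proof
    assume "u1 \<in> out_nbrs E x"
    then have "(u1, u1) \<in> E ^^ 2"
      using relpow_2_I[OF arc] by (simp add: out_nbrs_def)
    then show False
      using no_short_cycle[OF u1_in_V] k_ge_4 by fastforce
  qed
  then show "card (outlier V E k v) \<le> card (insert u1 (out_nbrs E x))"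
    using out_degree[OF x] card_outlier[OF v_in_V] card_insert_disjoint[of "out_nbrs E x" u1]
    by (metis card.infinite zero_neq_numeral eval_nat_numeral(3) order_refl)
qed

lemma v1_to_u_exact:
  assumes "u \<notin> outlier V E k v"
  shows "(v1, u) \<in> E ^^ (k - 1)"
proof -
  obtain n where n: "n \<le> k" "(v, u) \<in> E ^^ n"
    using assms u_in_V by (auto simp: outlier_iff)
  then obtain n' where n': "n = Suc n'"
    using u_neq_v by (cases n) auto
  have "(u2, u) \<notin> E ^^ n'"
  proof
    assume "(u2, u) \<in> E ^^ n'"
    then have "(u, u) \<in> E ^^ Suc n'"
      using relpow_Suc_I2[OF arcs(2)] by simp
    then show False
      using no_short_cycle[OF u_in_V] n(1) n' by fastforce
  qed
  then have "(v1, u) \<in> E ^^ n'"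
    using relpow_from_v_cases n(2) n' by blast
  moreover have "n' = k - 1"
    using v1_to_u_long[OF calculation] n(1) n' by simp
  ultimately show ?thesis
    by simp
qed

text \<open>The ball
  difference of v1 and u1, which has at most four elements, contains v1, p and u; two more elements
  are found both when y lies in the ball of u1 and when it does not.\<close>
context
  fixes x x' y p :: 'a
  assumes out_u1: "out_nbrs E u1 = {x, x'}"
    and out_v1: "out_nbrs E v1 = {x', y}" and x'_neq_y: "x' \<noteq> y"
    and v1_to_x: "(v1, x) \<in> E ^^ (k - 1)"
    and v1_to_p: "(v1, p) \<in> E ^^ (k - 2)" and p_to_x: "(p, x) \<in> E"
    and u_not_outlier: "u \<notin> outlier V E k v"
begin

private lemma arcs_u1: "(u1, x) \<in> E" "(u1, x') \<in> E"
  using out_u1 by (auto simp: out_nbrs_def)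

private lemma arcs_v1: "(v1, x') \<in> E" "(v1, y) \<in> E"
  using out_v1 by (auto simp: out_nbrs_def)

private lemma y_in_V: "y \<in> V"
  using arcs_v1 arc_in_V by blast

private lemma u1_not_near_v1: "u1 \<notin> out_ball E v1 (k - 1)"
  using u1_notin_out_ball_v1[OF arcs_u1(1) v1_to_x] by simp

private lemma y_to_x: "(y, x) \<in> E ^^ (k - 2)"
proof -
  have "(v1, x) \<in> E ^^ Suc (k - 2)"
    using v1_to_x k_ge_4 by (simp add: Suc_diff_Suc numeral_2_eq_2)
  then have "(x', x) \<in> E ^^ (k - 2) \<or> (y, x) \<in> E ^^ (k - 2)"
    using Image_relpow_Suc[where E = E and x = v1] out_v1 by auto
  moreover have "(x', x) \<notin> E ^^ (k - 2)"
  proof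
    assume "(x', x) \<in> E ^^ (k - 2)"
    then have "(u1, x) \<in> E ^^ Suc (k - 2)"
      using relpow_Suc_I2[OF arcs_u1(2)] by simp
    then show False
      using relpow_length_unique[OF u1_in_V _ relpow_0_I[THEN relpow_Suc_I, OF arcs_u1(1)]] k_ge_4
      by fastforce
  qed
  ultimately show ?thesis
    by blast
qed

private lemma v1_p_u_in_out_ball_Diff:
  "{v1, p, u} \<subseteq> out_ball E v1 (k - 1) - out_ball E u1 (k - 1)"
proof -
  have "w \<notin> out_ball E u1 (k - 1)" if "w \<in> {v1, p, u}" for w
  proof
    assume "w \<in> out_ball E u1 (k - 1)"
    then obtain i where i: "i \<le> k - 1" "(u1, w) \<in> E ^^ i"
      by (auto simp: mem_out_ball_iff)
    have first_step: "w = u1" if "(w, z) \<in> E" "(u1, z) \<in> E" for z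
    proof -
      have "i = 0"
        using relpow_length_unique[OF u1_in_V relpow_Suc_I[OF i(2) that(1)] relpow_Suc_I[OF relpow_0_I that(2)]]
          i(1) k_ge_4 by simp
      with i(2) show ?thesis
        by simp
    qed
    then show False
      using \<open>w \<in> {v1, p, u}\<close>
    proof (elim insertE emptyE)
      show "w = v1 \<Longrightarrow> False"
        using first_step[OF _ arcs_u1(2)] arcs_v1(1) u1_neq_v1 by blast
    next
      show "w = p \<Longrightarrow> False"
        using first_step[OF _ arcs_u1(1)] p_to_x u1_not_near_v1 relpow_in_out_ball[OF v1_to_p] by force
    next
      assume "w = u"
      then have "(u, u) \<in> E ^^ Suc i"
        using relpow_Suc_I2[OF arcs(1) i(2)] by simp
      then show False
        using no_short_cycle[OF u_in_V] i(1) k_ge_4 by fastforce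
    qed
  qed
  moreover have "{v1, p, u} \<subseteq> out_ball E v1 (k - 1)"
    using relpow_in_out_ball[OF relpow_0_I] relpow_in_out_ball[OF v1_to_p]
      relpow_in_out_ball[OF v1_to_u_exact[OF u_not_outlier]] by auto
  ultimately show ?thesis
    by blast
qed

private lemma distance_from_v1:
  assumes "(v1, z) \<in> E ^^ d" "d \<le> k"
  shows "z = v1 \<Longrightarrow> d = 0" "z = p \<Longrightarrow> d = k - 2" "z = u \<Longrightarrow> d = k - 1"
  using relpow_length_unique[OF v1_in_V _ relpow_0_I] relpow_length_unique[OF v1_in_V _ v1_to_p]
    relpow_length_unique[OF v1_in_V _ v1_to_u_exact[OF u_not_outlier]] assms by auto

private lemma v1_p_u_distinct: "v1 \<noteq> p" "v1 \<noteq> u" "p \<noteq> u"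
proof -
  have v1_u: "(v1, u) \<in> E ^^ (k - 1)"
    using v1_to_u_exact[OF u_not_outlier] .
  show "v1 \<noteq> p"
    using relpow_length_unique[OF v1_in_V relpow_0_I, of "k - 2"] v1_to_p k_ge_4 by auto
  show "v1 \<noteq> u"
    using relpow_length_unique[OF v1_in_V relpow_0_I, of "k - 1"] v1_u k_ge_4 by auto
  show "p \<noteq> u"
    using relpow_length_unique[OF v1_in_V v1_to_p, of "k - 1"] v1_u k_ge_4 by auto
qed

private lemma extras_in_out_ball_Diff_eq:
  assumes "z1 \<in> out_ball E v1 (k - 1) - out_ball E u1 (k - 1)" "z1 \<notin> {v1, p, u}"
    and "z2 \<in> out_ball E v1 (k - 1) - out_ball E u1 (k - 1)" "z2 \<notin> {v1, p, u}"
  shows "z1 = z2"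
proof (rule ccontr)
  assume "z1 \<noteq> z2"
  have "card {z1, z2, v1, p, u} = 5"
    using assms \<open>z1 \<noteq> z2\<close> v1_p_u_distinct by simp
  moreover have "{z1, z2, v1, p, u} \<subseteq> out_ball E v1 (k - 1) - out_ball E u1 (k - 1)"
    using assms v1_p_u_in_out_ball_Diff by blast
  ultimately have "5 \<le> card (out_ball E v1 (k - 1) - out_ball E u1 (k - 1))"
    using finite_out_ball[OF v1_in_V] by (metis card_mono finite_Diff)
  then show False
    using common_out_nbr.card_out_ball_Diff_le[OF swapped] by simp
qed

text \<open>A vertex w of the ball of u1 next to y is entered from x, which y reaches in k - 2 steps;
  so w is far from u1, and its out-layer at distance k from u1 supplies two further members of the
  ball difference.\<close>
private lemma u1_to_near_y_long:
  assumes yw: "(y, w) \<in> E ^^ e" and e: "e \<le> 1" and u1w: "(u1, w) \<in> E ^^ i" and i: "i \<le> k - 1"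
  shows "4 \<le> i"
proof -
  have "i \<noteq> 0"
  proof
    assume "i = 0"
    then have "(v1, u1) \<in> E ^^ Suc e"
      using relpow_Suc_I2[OF arcs_v1(2) yw] u1w by simp
    then have "u1 \<in> out_ball E v1 (k - 1)"
      by (rule relpow_in_out_ball) (use e k_ge_4 in simp)
    with u1_not_near_v1 show False ..
  qed
  then obtain i' where i': "i = Suc i'"
    by (cases i) auto
  then have "(x, w) \<in> E ^^ i' \<or> (x', w) \<in> E ^^ i'"
    using u1w Image_relpow_Suc[where E = E and x = u1] out_u1 by auto
  moreover have "(x', w) \<notin> E ^^ i'"
  proof
    assume "(x', w) \<in> E ^^ i'"
    then have "x' = y"
      using out_nbr_unique[OF arcs_v1 _ yw] i i' e k_ge_4 by simp
    with x'_neq_y show False ..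
  qed
  ultimately have "(x, w) \<in> E ^^ i'"
    by blast
  then have "(y, w) \<in> E ^^ (k - 2 + i')"
    using y_to_x by (auto simp: relpow_add)
  then have "\<not> k - 2 + i' \<le> k"
    using relpow_length_unique[OF y_in_V _ yw] e k_ge_4 by fastforce
  then show ?thesis
    using i' k_ge_4 by simp
qed

private lemma two_extras_in_out_ball_Diff:
  assumes yw: "(y, w) \<in> E ^^ e" and e: "e \<le> 1" and w: "w \<in> out_ball E u1 (k - 1)"
  obtains d z1 z2 where "e + 2 \<le> d" "d + 3 \<le> k + e" "z1 \<noteq> z2"
    "z1 \<in> out_ball E v1 (k - 1) - out_ball E u1 (k - 1)" "(v1, z1) \<in> E ^^ d"
    "z2 \<in> out_ball E v1 (k - 1) - out_ball E u1 (k - 1)" "(v1, z2) \<in> E ^^ d"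
proof -
  obtain i where i: "i \<le> k - 1" "(u1, w) \<in> E ^^ i"
    using w by (auto simp: mem_out_ball_iff)
  have i4: "4 \<le> i"
    by (rule u1_to_near_y_long[OF yw e i(2) i(1)])
  have v1w: "(v1, w) \<in> E ^^ Suc e"
    using relpow_Suc_I2[OF arcs_v1(2) yw] .
  have "0 < k - i" "k - i \<le> k"
    using i i4 by auto
  then obtain z1 z2 where z: "z1 \<noteq> z2" "(w, z1) \<in> E ^^ (k - i)" "(w, z2) \<in> E ^^ (k - i)"
    using layer_two_elements[OF relpow_in_V[OF u1_in_V i(2)]] by blast
  have "(E ^^ (k - i)) `` {w} \<subseteq> out_ball E v1 (k - 1) - out_ball E u1 (k - 1)"
    by (rule layer_subset_out_ball_Diff[OF u1_in_V i(2) v1w]) (use i i4 e in auto)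
  then have "z1 \<in> out_ball E v1 (k - 1) - out_ball E u1 (k - 1)"
    "z2 \<in> out_ball E v1 (k - 1) - out_ball E u1 (k - 1)"
    using z by blast+
  moreover have "(v1, z1) \<in> E ^^ (Suc e + (k - i))" "(v1, z2) \<in> E ^^ (Suc e + (k - i))"
    unfolding relpow_add using v1w z by blast+
  moreover have "e + 2 \<le> Suc e + (k - i)" "Suc e + (k - i) + 3 \<le> k + e"
    using i i4 by auto
  ultimately show ?thesis
    using that z(1) by blast
qed

lemma out_ball_Diff_too_large: False
proof (cases "y \<in> out_ball E u1 (k - 1)")
  case True
  then obtain d z1 z2 where d: "0 + 2 \<le> d" "d + 3 \<le> k + 0" and "z1 \<noteq> z2"
    and z1: "z1 \<in> out_ball E v1 (k - 1) - out_ball E u1 (k - 1)" "(v1, z1) \<in> E ^^ d"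
    and z2: "z2 \<in> out_ball E v1 (k - 1) - out_ball E u1 (k - 1)" "(v1, z2) \<in> E ^^ d"
    by (rule two_extras_in_out_ball_Diff[OF relpow_0_I le0])
  have "z1 \<notin> {v1, p, u}" "z2 \<notin> {v1, p, u}"
    using distance_from_v1[OF z1(2)] distance_from_v1[OF z2(2)] d by auto
  then show False
    using extras_in_out_ball_Diff_eq[OF z1(1) _ z2(1)] \<open>z1 \<noteq> z2\<close> by blast
next
  case False
  have v1y: "(v1, y) \<in> E ^^ 1"
    using arcs_v1(2) by simp
  have y: "y \<in> out_ball E v1 (k - 1) - out_ball E u1 (k - 1)" "y \<notin> {v1, p, u}"
    using False relpow_in_out_ball[OF v1y] distance_from_v1[OF v1y] k_ge_4 by auto
  obtain y' where yy': "(y, y') \<in> E" and "y' \<noteq> p"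
  proof -
    obtain a b where ab: "out_nbrs E y = {a, b}" "a \<noteq> b"
      using out_nbrs_eq_pair[OF y_in_V] by blast
    then have "(y, a) \<in> E" "(y, b) \<in> E"
      by (auto simp: out_nbrs_def)
    with ab(2) show ?thesis
      using that by (cases "a = p") auto
  qed
  have v1y': "(v1, y') \<in> E ^^ 2"
    using relpow_2_I[OF arcs_v1(2) yy'] .
  show False
  proof (cases "y' \<in> out_ball E u1 (k - 1)")
    case True
    have y_y': "(y, y') \<in> E ^^ 1"
      using yy' by simp
    obtain d z1 z2 where d: "1 + 2 \<le> d" "d + 3 \<le> k + 1" and "z1 \<noteq> z2"
      and z1: "z1 \<in> out_ball E v1 (k - 1) - out_ball E u1 (k - 1)" "(v1, z1) \<in> E ^^ d"
      and z2: "z2 \<in> out_ball E v1 (k - 1) - out_ball E u1 (k - 1)" "(v1, z2) \<in> E ^^ d"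
      by (rule two_extras_in_out_ball_Diff[OF y_y' order_refl True])
    then obtain z where z: "z \<in> out_ball E v1 (k - 1) - out_ball E u1 (k - 1)" "(v1, z) \<in> E ^^ d"
      "z \<noteq> p"
      by blast
    have dk: "d \<le> k"
      using d by simp
    have "z \<noteq> v1" "z \<noteq> u"
      using distance_from_v1(1,3)[OF z(2) dk] d by auto
    with z(3) have "z \<notin> {v1, p, u}"
      by simp
    moreover have "z \<noteq> y"
    proof
      assume "z = y"
      then have "d = 1"
        using relpow_length_unique[OF v1_in_V z(2)] v1y dk k_ge_4 by simp
      with d show False
        by simp
    qed
    ultimately show False
      using extras_in_out_ball_Diff_eq[OF y z(1)] by blast
  next
    case False
    have "y' \<noteq> v1" "y' \<noteq> u"
      using distance_from_v1(1,3)[OF v1y'] k_ge_4 by force+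
    with \<open>y' \<noteq> p\<close> have "y' \<notin> {v1, p, u}"
      by simp
    moreover have "y' \<in> out_ball E v1 (k - 1) - out_ball E u1 (k - 1)"
      using False relpow_in_out_ball[OF v1y'] k_ge_4 by simp
    moreover have "y' \<noteq> y"
    proof
      assume "y' = y"
      then show False
        using relpow_length_unique[OF v1_in_V v1y'[unfolded \<open>y' = y\<close>] v1y] k_ge_4 by simp
    qed
    ultimately show False
      using extras_in_out_ball_Diff_eq[OF y] by blast
  qed
qed

end

lemma far_and_adjacent_out_nbrs_u1_absurd:
  assumes out_u1: "out_nbrs E u1 = {x, x'}" and v1_to_x: "(v1, x) \<in> E ^^ (k - 1)"
    and arc: "(v1, x') \<in> E" and u: "u \<notin> outlier V E k v"
  shows False
proof -
  obtain y where y: "out_nbrs E v1 = {x', y}" "x' \<noteq> y"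
    using out_nbrs_eq_insert[OF arc] .
  have "(v1, x) \<in> E ^^ Suc (k - 2)"
    using v1_to_x k_ge_4 by (simp add: Suc_diff_Suc numeral_2_eq_2)
  then obtain p where "(v1, p) \<in> E ^^ (k - 2)" "(p, x) \<in> E"
    by (rule relpow_Suc_E)
  from out_ball_Diff_too_large[OF out_u1 y v1_to_x this u] show False .
qed

lemma out_nbr_u1_not_outlier_v:
  assumes arc: "(u1, x) \<in> E" and far: "(v1, x) \<in> E ^^ (k - 1)" and arc': "(u1, z) \<in> E"
  shows "z \<notin> outlier V E k v"
proof
  assume "z \<in> outlier V E k v"
  then consider "z = u1" | "(x, z) \<in> E"
    using outlier_v_eq[OF arc far] by (auto simp: out_nbrs_def)
  then show False
  proof cases
    case 1
    then show False
      using no_short_cycle[OF u1_in_V, of 1] arc' k_ge_4 by simp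
  next
    case 2
    then show False
      using relpow_length_unique[OF u1_in_V relpow_2_I[OF arc 2], of 1] arc' k_ge_4 by simp
  qed
qed

lemma u_not_outlier_v:
  assumes arc: "(u1, x) \<in> E" and far: "(v1, x) \<in> E ^^ (k - 1)"
  shows "u \<notin> outlier V E k v"
proof
  assume "u \<in> outlier V E k v"
  then consider "u = u1" | "(x, u) \<in> E"
    using outlier_v_eq[OF arc far] by (auto simp: out_nbrs_def)
  then show False
  proof cases
    case 1
    then show False
      using no_short_cycle[OF u_in_V, of 1] arcs(1) k_ge_4 by simp
  next
    case 2
    then have "(u, u) \<in> E ^^ Suc 2"
      using relpow_Suc_I2[OF arcs(1) relpow_2_I[OF arc]] by simp
    then show False
      using no_short_cycle[OF u_in_V] k_ge_4 by fastforce
  qed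
qed

text \<open>Both choices of x determine the same outlier set of v, so x and x' would share an
  out-neighbour.\<close>
lemma no_two_far_out_nbrs_u1:
  assumes arc: "(u1, x) \<in> E" and arc': "(u1, x') \<in> E" and "x \<noteq> x'"
    and far: "(v1, x) \<in> E ^^ (k - 1)" and far': "(v1, x') \<in> E ^^ (k - 1)"
  shows False
proof -
  obtain w where w: "(x', w) \<in> E"
    using out_nbrs_eq_pair[OF arc_in_V[OF arc', THEN conjunct2]] by (auto simp: out_nbrs_def)
  have "w \<noteq> u1"
  proof
    assume "w = u1"
    then show False
      using no_short_cycle[OF u1_in_V relpow_2_I[OF arc' w[unfolded \<open>w = u1\<close>]]] k_ge_4 by simp
  qed
  then have "(x, w) \<in> E"
    using outlier_v_eq[OF arc far] outlier_v_eq[OF arc' far'] w by (auto simp: out_nbrs_def)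
  then have "x = x'"
    using out_nbr_unique[OF arc arc', of w 1 1] w k_ge_4 by simp
  with \<open>x \<noteq> x'\<close> show False ..
qed

lemma out_nbr_u1_cases:
  assumes arc: "(u1, x) \<in> E"
  shows "(v1, x) \<in> E \<or> x \<in> outlier V E k v"
proof (rule ccontr)
  assume "\<not> ((v1, x) \<in> E \<or> x \<in> outlier V E k v)"
  then have far: "(v1, x) \<in> E ^^ (k - 1)"
    using out_nbr_u1_far_from_v1[OF arc] by blast
  obtain x' where x': "out_nbrs E u1 = {x, x'}" "x \<noteq> x'"
    using out_nbrs_eq_insert[OF arc] .
  then have arc': "(u1, x') \<in> E"
    by (auto simp: out_nbrs_def)
  show False
  proof (cases "(v1, x') \<in> E")
    case True
    then show False
      using far_and_adjacent_out_nbrs_u1_absurd[OF x'(1) far] u_not_outlier_v[OF arc far] by blast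
  next
    case False
    with out_nbr_u1_not_outlier_v[OF arc far arc'] have "(v1, x') \<in> E ^^ (k - 1)"
      using out_nbr_u1_far_from_v1[OF arc'] by blast
    with arc arc' x'(2) far show False
      by (rule no_two_far_out_nbrs_u1)
  qed
qed

end

theorem lemma6:
  fixes V :: "'a set" and E :: "('a \<times> 'a) set" and k :: nat
    and u v u1 u2 v1 u3 u4 v3 v4 :: 'a
  assumes "k \<ge> 4"
    and "digraph_2_k_plus3 V E k"
    and "u \<in> V" and "v \<in> V" and "u \<noteq> v"
    and "out_nbrs E u \<inter> out_nbrs E v = {u2}"
    and "out_nbrs E u = {u1, u2}"
    and "out_nbrs E v = {v1, u2}"
    and "out_nbrs E u1 = {u3, u4}"
    and "out_nbrs E v1 = {v3, v4}"
  shows "{u3, u4} \<subseteq> {v3, v4} \<union> outlier V E k v \<and>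
         {v3, v4} \<subseteq> {u3, u4} \<union> outlier V E k u"
proof -
  interpret common_out_nbr V E k u v u1 v1 u2
    using assms unfolding digraph_2_k_plus3_def diregular_def
    by unfold_locales auto
  have "x \<in> {v3, v4} \<union> outlier V E k v" if "x \<in> {u3, u4}" for x
    using out_nbr_u1_cases[of x] that assms(9,10) by (auto simp: out_nbrs_def)
  moreover have "x \<in> {u3, u4} \<union> outlier V E k u" if "x \<in> {v3, v4}" for x
    using common_out_nbr.out_nbr_u1_cases[OF swapped, of x] that assms(9,10)
    by (auto simp: out_nbrs_def)
  ultimately show ?thesis
    by blast
qed

end
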